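(* In the dynamic oligopoly model of the context, suppose that $c$ is continuous, increasing and convex on $A$ and that $u(x,m)$ is discretely convex and strictly increasing in $x$ and continuous in $m$. Then for every $x\in X$ and $m$, the function $a\mapsto H(x,a;m,V)=u(x,m)-c(a)+\beta\sum_{y}W(x,a,y)V(y,m)$ is strictly concave on $A$; hence the optimal policy correspondence $G(x,m)=\arg\max_{a\in A}H(x,a;m,V)$ is single-valued and there is a unique optimal policy $g$.
   Context: Dynamic oligopoly model. States $X=\{0,1,2,\dots\}$; actions $A=[\underline a,1]$, $0<\underline a<1$. For $x\ge1$: $W(x,a,x+1)=\frac{(1-\delta)a}{1+a}$, $W(x,a,x)=\frac{1-\delta+\delta a}{1+a}$, $W(x,a,x-1)=\frac{\delta}{1+a}$, otherwise $0$; $W(0,a,1)=\frac{(1-\delta)a}{1+a}$, $W(0,a,0)=1-W(0,a,1)$; $\delta\in(0,1)$. Payoff $u(x,m)-c(a)$, discount $\beta\in(0,1)$. For fixed $m$, the value function $V(x,m)$ is assumed finite, satisfies $V(x,m)=\max_{a\in A}\{u(x,m)-c(a)+\beta\sum_y W(x,a,y)V(y,m)\}$, and is the pointwise limit of $T^nf$ for any $f$ (in particular $f\equiv0$), where $Tf(x,m)=\max_{a\in A}\{u(x,m)-c(a)+\beta\sum_yW(x,a,y)f(y,m)\}$. A function $h:X\to\mathbb{R}$ is discretely convex if $h(x+2)-2h(x+1)+h(x)\ge0$ for all $x\ge0$. *)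

theory Defs
  imports "HOL-Analysis.Analysis"
begin

definition Aset :: "real \<Rightarrow> real set" where
  "Aset alo = {alo..1}"

definition W :: "real \<Rightarrow> nat \<Rightarrow> real \<Rightarrow> nat \<Rightarrow> real" where
  "W \<delta> x a y =
     (if x = 0 then
        (if y = 1 then (1 - \<delta>) * a / (1 + a)
         else if y = 0 then 1 - (1 - \<delta>) * a / (1 + a) else 0)
      else
        (if y = x + 1 then (1 - \<delta>) * a / (1 + a)
         else if y = x then (1 - \<delta> + \<delta> * a) / (1 + a)
         else if y = x - 1 then \<delta> / (1 + a) else 0))"

text \<open>Expected continuation value sum_y W(x,a,y) f(y,m); W(x,a,y) = 0 unless y \<le> x+1.\<close>
definition EV :: "real \<Rightarrow> nat \<Rightarrow> real \<Rightarrow> (nat \<Rightarrow> 'm \<Rightarrow> real) \<Rightarrow> 'm \<Rightarrow> real" where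
  "EV \<delta> x a f m = (\<Sum>y\<le>Suc x. W \<delta> x a y * f y m)"

definition H :: "(nat \<Rightarrow> 'm \<Rightarrow> real) \<Rightarrow> (real \<Rightarrow> real) \<Rightarrow> real \<Rightarrow> real
                  \<Rightarrow> nat \<Rightarrow> real \<Rightarrow> 'm \<Rightarrow> (nat \<Rightarrow> 'm \<Rightarrow> real) \<Rightarrow> real" where
  "H u c \<beta> \<delta> x a m f = u x m - c a + \<beta> * EV \<delta> x a f m"

text \<open>Bellman operator T (the max over the compact set A is written as a supremum).\<close>
definition Top :: "(nat \<Rightarrow> 'm \<Rightarrow> real) \<Rightarrow> (real \<Rightarrow> real) \<Rightarrow> real \<Rightarrow> real \<Rightarrow> real
                   \<Rightarrow> (nat \<Rightarrow> 'm \<Rightarrow> real) \<Rightarrow> (nat \<Rightarrow> 'm \<Rightarrow> real)" where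
  "Top u c \<beta> \<delta> alo f = (\<lambda>x m. SUP a\<in>Aset alo. H u c \<beta> \<delta> x a m f)"

definition discretely_convex :: "(nat \<Rightarrow> real) \<Rightarrow> bool" where
  "discretely_convex h \<longleftrightarrow> (\<forall>x. h (x + 2) - 2 * h (x + 1) + h x \<ge> 0)"

definition strictly_concave_on :: "real set \<Rightarrow> (real \<Rightarrow> real) \<Rightarrow> bool" where
  "strictly_concave_on S f \<longleftrightarrow> convex S \<and>
     (\<forall>x\<in>S. \<forall>y\<in>S. x \<noteq> y \<longrightarrow> (\<forall>t. 0 < t \<and> t < 1 \<longrightarrow>
        f ((1 - t) * x + t * y) > (1 - t) * f x + t * f y))"

definition Gcorr :: "(nat \<Rightarrow> 'm \<Rightarrow> real) \<Rightarrow> (real \<Rightarrow> real) \<Rightarrow> real \<Rightarrow> real \<Rightarrow> real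
                     \<Rightarrow> (nat \<Rightarrow> 'm \<Rightarrow> real) \<Rightarrow> nat \<Rightarrow> 'm \<Rightarrow> real set" where
  "Gcorr u c \<beta> \<delta> alo V x m =
     {a \<in> Aset alo. \<forall>b\<in>Aset alo. H u c \<beta> \<delta> x b m V \<le> H u c \<beta> \<delta> x a m V}"

end

theory Submission imports Defs begin

(* The expected continuation value is affine in 1/(1+a):
   EV(x,a) = alpha - K/(1+a) with K = (1-delta)(V(x+1) - V x) + delta (V x - V(x-1)).
   Value iteration preserves monotonicity in the state, so V is nondecreasing; the Bellman
   equation and strict monotonicity of u then make V strictly increasing. Hence K > 0 and
   a \<mapsto> EV(x,a) is strictly concave, subtracting the convex cost keeps H strictly concave,
   and the maximiser, which exists by the Bellman equation, is unique. *)

(* At x = 0 the truncated subtraction gives x - 1 = 0, so the delta-term vanishes, in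
   agreement with the boundary row of W. *)
lemma EV_eq:
  assumes "1 + a \<noteq> 0"
  shows "EV \<delta> x a f m = f x m
           + ((1 - \<delta>) * a * (f (Suc x) m - f x m) - \<delta> * (f x m - f (x - 1) m)) / (1 + a)"
proof (cases x)
  case 0
  have "EV \<delta> x a f m = W \<delta> 0 a 0 * f 0 m + W \<delta> 0 a 1 * f 1 m"
    by (simp add: EV_def 0)
  also have "\<dots> = f 0 m + (1 - \<delta>) * a * (f 1 m - f 0 m) / (1 + a)"
    by (simp add: W_def algebra_simps add_divide_distrib diff_divide_distrib)
  finally show ?thesis by (simp add: 0)
next
  case (Suc k)
  have below_k: "(\<Sum>y<k. W \<delta> x a y * f y m) = 0"
    by (rule sum.neutral) (auto simp: W_def Suc)
  have "EV \<delta> x a f m = W \<delta> x a k * f k m + W \<delta> x a x * f x m + W \<delta> x a (Suc x) * f (Suc x) m"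
    unfolding EV_def using below_k by (simp add: Suc lessThan_Suc_atMost[symmetric])
  also have "\<dots> = (\<delta> * f k m + (1 - \<delta> + \<delta> * a) * f x m + (1 - \<delta>) * a * f (Suc x) m) / (1 + a)"
    by (simp add: Suc W_def add_divide_distrib diff_divide_distrib distrib_right left_diff_distrib)
  finally show ?thesis using assms by (simp add: Suc field_simps)
qed

lemma EV_Suc_diff:
  assumes "1 + a \<noteq> 0"
  shows "EV \<delta> (Suc x) a f m - EV \<delta> x a f m
           = ((1 - \<delta>) * a * (f (Suc (Suc x)) m - f (Suc x) m)
              + (1 - \<delta> + \<delta> * a) * (f (Suc x) m - f x m) + \<delta> * (f x m - f (x - 1) m)) / (1 + a)"
  using assms by (simp add: EV_eq divide_simps) (simp add: algebra_simps)

lemma EV_mono_state: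
  assumes "mono (\<lambda>y. f y m)" "0 \<le> a" "0 \<le> \<delta>" "\<delta> \<le> 1"
  shows "EV \<delta> x a f m \<le> EV \<delta> (Suc x) a f m"
proof -
  have "f y m \<le> f z m" if "y \<le> z" for y z
    using assms(1) that by (simp add: mono_def)
  then have "0 \<le> EV \<delta> (Suc x) a f m - EV \<delta> x a f m"
    using assms(2-4) by (simp add: EV_Suc_diff)
  then show ?thesis by simp
qed

lemma inverse_convex_combination_less:
  fixes p q t :: real
  assumes "0 < p" "0 < q" "p \<noteq> q" "0 < t" "t < 1"
  shows "1 / ((1 - t) * p + t * q) < (1 - t) / p + t / q"
proof -
  have pos: "0 < (1 - t) * p + t * q"
    using assms by (simp add: add_pos_pos)
  have "((1 - t) * q + t * p) * ((1 - t) * p + t * q) = p * q + t * (1 - t) * (p - q)\<^sup>2"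
    by (simp add: algebra_simps power2_eq_square)
  moreover have "0 < t * (1 - t) * (p - q)\<^sup>2"
    using assms by simp
  ultimately have "p * q < ((1 - t) * q + t * p) * ((1 - t) * p + t * q)"
    by linarith
  then show ?thesis
    using assms pos by (simp add: field_simps)
qed

lemma EV_strictly_concave:
  assumes "strict_mono (\<lambda>y. f y m)" "0 < \<delta>" "\<delta> < 1" "convex S" "S \<subseteq> {0..}"
  shows "strictly_concave_on S (\<lambda>a. EV \<delta> x a f m)"
  unfolding strictly_concave_on_def
proof (intro conjI ballI impI allI)
  define K where "K = (1 - \<delta>) * (f (Suc x) m - f x m) + \<delta> * (f x m - f (x - 1) m)"
  define \<alpha> where "\<alpha> = f x m + (1 - \<delta>) * (f (Suc x) m - f x m)"
  have "f (x - 1) m \<le> f x m" "f x m < f (Suc x) m"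
    using assms(1) strict_mono_less_eq[OF assms(1)] by (auto simp: strict_mono_def)
  then have K_pos: "0 < K"
    using assms(2,3) unfolding K_def by (intro add_pos_nonneg) auto
  have EV_alpha: "EV \<delta> x a f m = \<alpha> - K / (1 + a)" if "0 \<le> a" for a
    using that by (simp add: EV_eq \<alpha>_def K_def field_simps)
  show "convex S" by fact
  fix a b t assume a: "a \<in> S" and b: "b \<in> S" and "a \<noteq> b" and t: "0 < (t::real) \<and> t < 1"
  have nonneg: "0 \<le> a" "0 \<le> b"
    using a b assms(5) by auto
  have "1 / ((1 - t) * (1 + a) + t * (1 + b)) < (1 - t) / (1 + a) + t / (1 + b)"
    using nonneg \<open>a \<noteq> b\<close> t by (intro inverse_convex_combination_less) auto
  then have "K / ((1 - t) * (1 + a) + t * (1 + b)) < K * ((1 - t) / (1 + a) + t / (1 + b))"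
    using K_pos by (metis mult_strict_left_mono times_divide_eq_right mult_1_right)
  moreover have "1 + ((1 - t) * a + t * b) = (1 - t) * (1 + a) + t * (1 + b)"
    by (simp add: algebra_simps)
  moreover have "0 \<le> (1 - t) * a + t * b"
    using nonneg t by simp
  ultimately show "(1 - t) * EV \<delta> x a f m + t * EV \<delta> x b f m < EV \<delta> x ((1 - t) * a + t * b) f m"
    using nonneg by (simp add: EV_alpha algebra_simps)
qed

lemma strictly_concave_on_diff_convex:
  assumes f: "strictly_concave_on S f" and h: "convex_on S h" and "0 < \<beta>"
  shows "strictly_concave_on S (\<lambda>a. k - h a + \<beta> * f a)"
  unfolding strictly_concave_on_def
proof (intro conjI ballI impI allI)
  show "convex S"
    using f by (simp add: strictly_concave_on_def)
  fix a b t assume a: "a \<in> S" and b: "b \<in> S" and "a \<noteq> b" and t: "0 < (t::real) \<and> t < 1"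
  have "(1 - t) * f a + t * f b < f ((1 - t) * a + t * b)"
    using f a b \<open>a \<noteq> b\<close> t by (simp add: strictly_concave_on_def)
  then have "\<beta> * ((1 - t) * f a + t * f b) < \<beta> * f ((1 - t) * a + t * b)"
    using \<open>0 < \<beta>\<close> by simp
  moreover have "h ((1 - t) * a + t * b) \<le> (1 - t) * h a + t * h b"
    using convex_onD[OF h, of t a b] a b t by simp
  ultimately show "(1 - t) * (k - h a + \<beta> * f a) + t * (k - h b + \<beta> * f b)
                   < k - h ((1 - t) * a + t * b) + \<beta> * f ((1 - t) * a + t * b)"
    by (simp add: algebra_simps)
qed

lemma strictly_concave_on_maximizer_unique:
  assumes f: "strictly_concave_on S f" and "a \<in> S" "b \<in> S"
    and a_max: "\<forall>z\<in>S. f z \<le> f a" and b_max: "\<forall>z\<in>S. f z \<le> f b"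
  shows "a = b"
proof (rule ccontr)
  assume "a \<noteq> b"
  let ?mid = "(1 - 1/2) * a + (1/2) * b"
  have "\<forall>t. 0 < t \<and> t < 1 \<longrightarrow> (1 - t) * f a + t * f b < f ((1 - t) * a + t * b)"
    using f assms(2,3) \<open>a \<noteq> b\<close> by (simp add: strictly_concave_on_def)
  from this[rule_format, of "1/2"] have "(1 - 1/2) * f a + (1/2) * f b < f ?mid"
    by simp
  moreover have "?mid \<in> S"
    using f convexD[of S a b "1 - 1/2" "1/2"] assms(2,3) by (simp add: strictly_concave_on_def)
  ultimately show False
    using a_max b_max assms(2,3) by fastforce
qed

lemma continuous_on_EV:
  assumes "S \<subseteq> {0..}"
  shows "continuous_on S (\<lambda>a. EV \<delta> x a f m)"
proof -
  have "continuous_on S (\<lambda>a. f x m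
          + ((1 - \<delta>) * a * (f (Suc x) m - f x m) - \<delta> * (f x m - f (x - 1) m)) / (1 + a))"
    using assms by (intro continuous_intros) auto
  then show ?thesis
    by (rule continuous_on_cong[THEN iffD1, rotated 2]) (use assms in \<open>auto simp: EV_eq\<close>)
qed

lemma bdd_above_H:
  assumes "compact S" "S \<subseteq> {0..}" "continuous_on S c"
  shows "bdd_above ((\<lambda>a. H u c \<beta> \<delta> x a m f) ` S)"
proof -
  have "continuous_on S (\<lambda>a. H u c \<beta> \<delta> x a m f)"
    unfolding H_def using assms by (intro continuous_intros continuous_on_EV)
  then show ?thesis
    using assms(1) by (intro bounded_imp_bdd_above compact_imp_bounded compact_continuous_image)
qed

lemma Top_mono_state:
  assumes alo: "0 \<le> alo" "alo \<le> 1" and "continuous_on (Aset alo) c"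
    and u: "mono (\<lambda>y. u y m)" and f: "mono (\<lambda>y. f y m)"
    and "0 \<le> \<delta>" "\<delta> \<le> 1" "0 \<le> \<beta>"
  shows "mono (\<lambda>y. Top u c \<beta> \<delta> alo f y m)"
  unfolding mono_iff_le_Suc Top_def
proof (intro allI cSUP_least)
  show "Aset alo \<noteq> {}"
    using alo by (auto simp: Aset_def)
  fix x a assume a: "a \<in> Aset alo"
  have "H u c \<beta> \<delta> x a m f \<le> H u c \<beta> \<delta> (Suc x) a m f"
    unfolding H_def using u EV_mono_state[of f m a \<delta> x, OF f] a assms
    by (auto simp: Aset_def mono_iff_le_Suc intro!: add_mono mult_left_mono)
  also have "\<dots> \<le> (SUP a\<in>Aset alo. H u c \<beta> \<delta> (Suc x) a m f)"
    using a assms by (intro cSUP_upper bdd_above_H) (auto simp: Aset_def)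
  finally show "H u c \<beta> \<delta> x a m f \<le> (SUP a\<in>Aset alo. H u c \<beta> \<delta> (Suc x) a m f)" .
qed

lemma Top_iterate_mono_state:
  assumes "0 \<le> alo" "alo \<le> 1" "continuous_on (Aset alo) c" "mono (\<lambda>y. u y m)"
    "0 \<le> \<delta>" "\<delta> \<le> 1" "0 \<le> \<beta>" and f\<^sub>0: "mono (\<lambda>y. f\<^sub>0 y m)"
  shows "mono (\<lambda>y. (Top u c \<beta> \<delta> alo ^^ n) f\<^sub>0 y m)"
  using f\<^sub>0 by (induction n) (simp_all add: assms Top_mono_state)

lemma value_function_strict_mono:
  assumes "0 \<le> alo" "alo \<le> 1" "continuous_on (Aset alo) c" and u: "strict_mono (\<lambda>y. u y m)"
    and "0 \<le> \<delta>" "\<delta> \<le> 1" "0 < \<beta>"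
    and bellman: "\<And>x. (\<exists>a\<in>Aset alo. V x m = H u c \<beta> \<delta> x a m V)
                      \<and> (\<forall>a\<in>Aset alo. H u c \<beta> \<delta> x a m V \<le> V x m)"
    and limit: "\<And>x. (\<lambda>n. (Top u c \<beta> \<delta> alo ^^ n) (\<lambda>_ _. 0) x m) \<longlonglongrightarrow> V x m"
  shows "strict_mono (\<lambda>y. V y m)"
  unfolding strict_mono_Suc_iff
proof
  fix x
  have "mono (\<lambda>y. u y m)"
    using u by (simp add: strict_mono_mono)
  then have "mono (\<lambda>y. (Top u c \<beta> \<delta> alo ^^ n) (\<lambda>_ _. 0) y m)" for n
    using assms by (intro Top_iterate_mono_state) (auto simp: mono_def)
  then have "(Top u c \<beta> \<delta> alo ^^ n) (\<lambda>_ _. 0) y m \<le> (Top u c \<beta> \<delta> alo ^^ n) (\<lambda>_ _. 0) (Suc y) m"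
    for n y by (simp add: mono_iff_le_Suc)
  then have V_mono: "mono (\<lambda>y. V y m)"
    unfolding mono_iff_le_Suc by (blast intro: LIMSEQ_le[OF limit limit])
  obtain a where a: "a \<in> Aset alo" and V_eq: "V x m = H u c \<beta> \<delta> x a m V"
    using bellman by blast
  have "EV \<delta> x a V m \<le> EV \<delta> (Suc x) a V m"
    using a assms by (intro EV_mono_state[of V m, OF V_mono]) (auto simp: Aset_def)
  then have "H u c \<beta> \<delta> x a m V < H u c \<beta> \<delta> (Suc x) a m V"
    unfolding H_def using u \<open>0 < \<beta>\<close> by (intro add_less_le_mono) (auto simp: strict_mono_Suc_iff)
  also have "\<dots> \<le> V (Suc x) m"
    using bellman a by blast
  finally show "V x m < V (Suc x) m"
    using V_eq by simp
qed

lemma Gcorr_eq_singleton: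
  assumes "strictly_concave_on (Aset alo) (\<lambda>a. H u c \<beta> \<delta> x a m V)"
    and "a \<in> Aset alo" "\<forall>b\<in>Aset alo. H u c \<beta> \<delta> x b m V \<le> H u c \<beta> \<delta> x a m V"
  shows "Gcorr u c \<beta> \<delta> alo V x m = {a}"
  using assms strictly_concave_on_maximizer_unique[OF assms(1)] by (auto simp: Gcorr_def)

theorem mainTheorem7:
  fixes u :: "nat \<Rightarrow> 'm::topological_space \<Rightarrow> real"
    and c :: "real \<Rightarrow> real"
    and V :: "nat \<Rightarrow> 'm \<Rightarrow> real"
    and \<beta> \<delta> alo :: real
  assumes alo: "0 < alo" "alo < 1"
    and delta: "0 < \<delta>" "\<delta> < 1"
    and beta: "0 < \<beta>" "\<beta> < 1"
    and c_cont: "continuous_on (Aset alo) c"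
    and c_incr: "mono_on (Aset alo) c"
    and c_conv: "convex_on (Aset alo) c"
    and u_dconv: "\<And>m. discretely_convex (\<lambda>x. u x m)"
    and u_smono: "\<And>m. strict_mono (\<lambda>x. u x m)"
    and u_cont: "\<And>x. continuous_on UNIV (\<lambda>m. u x m)"
    and V_bellman: "\<And>x m. (\<exists>a\<in>Aset alo. V x m = H u c \<beta> \<delta> x a m V)
                         \<and> (\<forall>a\<in>Aset alo. H u c \<beta> \<delta> x a m V \<le> V x m)"
    and V_limit: "\<And>x m. (\<lambda>n. ((Top u c \<beta> \<delta> alo ^^ n) (\<lambda>_ _. 0)) x m) \<longlonglongrightarrow> V x m"
  shows "(\<forall>x m. strictly_concave_on (Aset alo) (\<lambda>a. H u c \<beta> \<delta> x a m V))
       \<and> (\<forall>x m. \<exists>a. Gcorr u c \<beta> \<delta> alo V x m = {a})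
       \<and> (\<exists>!g. \<forall>x m. g x m \<in> Gcorr u c \<beta> \<delta> alo V x m)"
proof -
  have V_smono: "strict_mono (\<lambda>y. V y m)" for m
    using alo delta by (intro value_function_strict_mono[OF _ _ c_cont u_smono _ _ beta(1) V_bellman V_limit]) auto
  have concave: "strictly_concave_on (Aset alo) (\<lambda>a. H u c \<beta> \<delta> x a m V)" for x m
    unfolding H_def using V_smono delta alo beta c_conv
    by (intro strictly_concave_on_diff_convex EV_strictly_concave) (auto simp: Aset_def)
  have single: "\<exists>a. Gcorr u c \<beta> \<delta> alo V x m = {a}" for x m
    using V_bellman[of x m] Gcorr_eq_singleton[OF concave] by metis
  then obtain g where g: "\<And>x m. Gcorr u c \<beta> \<delta> alo V x m = {g x m}"
    by metis
  then have "\<exists>!g. \<forall>x m. g x m \<in> Gcorr u c \<beta> \<delta> alo V x m"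
    by (intro ex1I[of _ g]) (auto intro!: ext)
  with concave single show ?thesis
    by blast
qed

end
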